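(* Let $(X,\varphi)$ be an irreducible Smale space, $\mathcal R_1$ a Markov partition with $\max_{R\in\mathcal R_1}\operatorname{diam}R\le\varepsilon_X''/2$, and $\mathcal R_n=\{R\in\bigvee_{i=1-n}^{n-1}\varphi^{-i}(\mathcal R_1):\operatorname{int}R\ne\varnothing\}$ for $n\in\mathbb N$. If $\varphi^{-1}$ is Lipschitz then for every $n\in\mathbb N$ $$\min_{R\in\mathcal R_n}\operatorname{diam}(R)\ge\operatorname{Lip}(\varphi^{-1})^{-n+1}\,\underline{\operatorname{diam}}_s\mathcal R_1,$$ and if $\varphi$ is Lipschitz then for every $n\in\mathbb N$ $$\min_{R\in\mathcal R_n}\operatorname{diam}(R)\ge\operatorname{Lip}(\varphi)^{-n+1}\,\underline{\operatorname{diam}}_u\mathcal R_1.$$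
   Context: Here $\underline{\operatorname{diam}}_s\mathcal R_1=\min_{R\in\mathcal R_1}\inf_{x\in R}\operatorname{diam}(X^s(x,R))$ and $\underline{\operatorname{diam}}_u\mathcal R_1=\min_{R\in\mathcal R_1}\inf_{x\in R}\operatorname{diam}(X^u(x,R))$. A Smale space $(X,\varphi)$: compact metric space $(X,d)$ (assumed infinite), homeomorphism $\varphi$, constants $\varepsilon_X>0,\lambda_X>1$ and a continuous bracket $[\cdot,\cdot]$ on $\{(x,y):d(x,y)\le\varepsilon_X\}$ with $[x,x]=x$, $[x,[y,z]]=[x,z]$, $[[x,y],z]=[x,z]$, $\varphi([x,y])=[\varphi(x),\varphi(y)]$ (whenever defined), such that $\varphi$ contracts distances by $\lambda_X^{-1}$ on local stable sets $X^s(x,\varepsilon)=\{y:d(x,y)<\varepsilon,[x,y]=y\}$ and $\varphi^{-1}$ contracts by $\lambda_X^{-1}$ on local unstable sets $X^u(x,\varepsilon)=\{y:d(x,y)<\varepsilon,[y,x]=y\}$. Irreducible: for nonempty open $U,V$ some $n\in\mathbb N$ has $\varphi^n(U)\cap V\ne\varnothing$. Fix $\varepsilon_X'\in(0,\varepsilon_X/2]$ with $d(x,y)\le\varepsilon_X'\Rightarrow d(x,[x,y]),d(y,[x,y])<\varepsilon_X/2$, and $\varepsilon_X''\in(0,\varepsilon_X'/12)$ with $d(x,y)\le\varepsilon_X''\Rightarrow d(\varphi^i x,\varphi^i y)\le\varepsilon_X'/2$ ($|i|\le2$) and $d([x,y],x),d([x,y],y)\le\varepsilon_X'/4$. Rectangle: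 nonempty $R$, $\operatorname{diam}R\le\varepsilon_X'$, $[x,y]\in R$ for $x,y\in R$; $X^{s}(x,R)=X^{s}(x,2\varepsilon_X')\cap R$, $X^{u}(x,R)=X^{u}(x,2\varepsilon_X')\cap R$; proper: closed with $R=\operatorname{cl}\operatorname{int}R$. Markov partition: finite cover by nonempty proper rectangles with pairwise disjoint interiors such that $\varphi(X^u(x,R_i))\supset X^u(\varphi x,R_j)$ and $\varphi(X^s(x,R_i))\subset X^s(\varphi x,R_j)$ whenever $x\in\operatorname{int}R_i\cap\varphi^{-1}(\operatorname{int}R_j)$. $\mathcal U\vee\mathcal W=\{U\cap W\}$. *)

theory Defs
  imports "HOL-Analysis.Analysis"
begin

definition phi_pow :: "('a \<Rightarrow> 'a) \<Rightarrow> int \<Rightarrow> 'a \<Rightarrow> 'a" where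
  "phi_pow f i = (if 0 \<le> i then f ^^ nat i else (inv f) ^^ nat (- i))"

definition smale_space ::
  "('a::metric_space \<Rightarrow> 'a) \<Rightarrow> real \<Rightarrow> real \<Rightarrow> ('a \<Rightarrow> 'a \<Rightarrow> 'a) \<Rightarrow> bool" where
  "smale_space phi eps lam br \<longleftrightarrow>
     compact (UNIV :: 'a set) \<and> infinite (UNIV :: 'a set) \<and>
     bij phi \<and> continuous_on UNIV phi \<and> continuous_on UNIV (inv phi) \<and>
     eps > 0 \<and> lam > 1 \<and>
     continuous_on {(x, y). dist x y \<le> eps} (\<lambda>(x, y). br x y) \<and>
     (\<forall>x. br x x = x) \<and>
     (\<forall>x y z. dist y z \<le> eps \<and> dist x (br y z) \<le> eps \<and> dist x z \<le> eps
        \<longrightarrow> br x (br y z) = br x z) \<and>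
     (\<forall>x y z. dist x y \<le> eps \<and> dist (br x y) z \<le> eps \<and> dist x z \<le> eps
        \<longrightarrow> br (br x y) z = br x z) \<and>
     (\<forall>x y. dist x y \<le> eps \<and> dist (phi x) (phi y) \<le> eps
        \<longrightarrow> phi (br x y) = br (phi x) (phi y)) \<and>
     (\<forall>x y. dist x y < eps \<and> br x y = y
        \<longrightarrow> dist (phi x) (phi y) \<le> dist x y / lam) \<and>
     (\<forall>x y. dist x y < eps \<and> br y x = y
        \<longrightarrow> dist (inv phi x) (inv phi y) \<le> dist x y / lam)"

definition loc_stable :: "('a::metric_space \<Rightarrow> 'a \<Rightarrow> 'a) \<Rightarrow> 'a \<Rightarrow> real \<Rightarrow> 'a set" where
  "loc_stable br x e = {y. dist x y < e \<and> br x y = y}"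

definition loc_unstable :: "('a::metric_space \<Rightarrow> 'a \<Rightarrow> 'a) \<Rightarrow> 'a \<Rightarrow> real \<Rightarrow> 'a set" where
  "loc_unstable br x e = {y. dist x y < e \<and> br y x = y}"

definition irreducible_map :: "('a::topological_space \<Rightarrow> 'a) \<Rightarrow> bool" where
  "irreducible_map phi \<longleftrightarrow>
     (\<forall>U V. open U \<and> open V \<and> U \<noteq> {} \<and> V \<noteq> {} \<longrightarrow>
        (\<exists>n::nat. n \<ge> 1 \<and> (phi ^^ n) ` U \<inter> V \<noteq> {}))"

text \<open>Admissibility of the auxiliary constants eps' (e1) and eps'' (e2).\<close>
definition eps1_ok :: "('a::metric_space \<Rightarrow> 'a \<Rightarrow> 'a) \<Rightarrow> real \<Rightarrow> real \<Rightarrow> bool" where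
  "eps1_ok br eps e1 \<longleftrightarrow> 0 < e1 \<and> e1 \<le> eps / 2 \<and>
     (\<forall>x y. dist x y \<le> e1 \<longrightarrow> dist x (br x y) < eps / 2 \<and> dist y (br x y) < eps / 2)"

definition eps2_ok :: "('a::metric_space \<Rightarrow> 'a) \<Rightarrow> ('a \<Rightarrow> 'a \<Rightarrow> 'a) \<Rightarrow> real \<Rightarrow> real \<Rightarrow> bool" where
  "eps2_ok phi br e1 e2 \<longleftrightarrow> 0 < e2 \<and> e2 < e1 / 12 \<and>
     (\<forall>x y. dist x y \<le> e2 \<longrightarrow>
        (\<forall>i::int. \<bar>i\<bar> \<le> 2 \<longrightarrow> dist (phi_pow phi i x) (phi_pow phi i y) \<le> e1 / 2) \<and>
        dist (br x y) x \<le> e1 / 4 \<and> dist (br x y) y \<le> e1 / 4)"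

definition rectangle :: "('a::metric_space \<Rightarrow> 'a \<Rightarrow> 'a) \<Rightarrow> real \<Rightarrow> 'a set \<Rightarrow> bool" where
  "rectangle br e1 R \<longleftrightarrow> R \<noteq> {} \<and> diameter R \<le> e1 \<and> (\<forall>x\<in>R. \<forall>y\<in>R. br x y \<in> R)"

definition Xs_R :: "('a::metric_space \<Rightarrow> 'a \<Rightarrow> 'a) \<Rightarrow> real \<Rightarrow> 'a \<Rightarrow> 'a set \<Rightarrow> 'a set" where
  "Xs_R br e1 x R = loc_stable br x (2 * e1) \<inter> R"

definition Xu_R :: "('a::metric_space \<Rightarrow> 'a \<Rightarrow> 'a) \<Rightarrow> real \<Rightarrow> 'a \<Rightarrow> 'a set \<Rightarrow> 'a set" where
  "Xu_R br e1 x R = loc_unstable br x (2 * e1) \<inter> R"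

definition proper_rectangle :: "('a::metric_space \<Rightarrow> 'a \<Rightarrow> 'a) \<Rightarrow> real \<Rightarrow> 'a set \<Rightarrow> bool" where
  "proper_rectangle br e1 R \<longleftrightarrow> rectangle br e1 R \<and> closed R \<and> R = closure (interior R)"

definition markov_partition ::
  "('a::metric_space \<Rightarrow> 'a) \<Rightarrow> ('a \<Rightarrow> 'a \<Rightarrow> 'a) \<Rightarrow> real \<Rightarrow> 'a set set \<Rightarrow> bool" where
  "markov_partition phi br e1 P \<longleftrightarrow>
     finite P \<and> \<Union>P = UNIV \<and> (\<forall>R\<in>P. proper_rectangle br e1 R) \<and>
     (\<forall>R\<in>P. \<forall>R'\<in>P. R \<noteq> R' \<longrightarrow> interior R \<inter> interior R' = {}) \<and>
     (\<forall>Ri\<in>P. \<forall>Rj\<in>P. \<forall>x \<in> interior Ri \<inter> phi -` interior Rj.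
        Xu_R br e1 (phi x) Rj \<subseteq> phi ` Xu_R br e1 x Ri \<and>
        phi ` Xs_R br e1 x Ri \<subseteq> Xs_R br e1 (phi x) Rj)"

definition refined_partition :: "('a::topological_space \<Rightarrow> 'a) \<Rightarrow> 'a set set \<Rightarrow> nat \<Rightarrow> 'a set set" where
  "refined_partition phi P n =
     {R. interior R \<noteq> {} \<and>
         (\<exists>f. (\<forall>i\<in>{1 - int n..int n - 1}. f i \<in> P) \<and>
              R = (\<Inter>i\<in>{1 - int n..int n - 1}. phi_pow phi (- i) ` f i))}"

definition diam_s :: "('a::metric_space \<Rightarrow> 'a \<Rightarrow> 'a) \<Rightarrow> real \<Rightarrow> 'a set set \<Rightarrow> real" where
  "diam_s br e1 P = Min ((\<lambda>R. INF x\<in>R. diameter (Xs_R br e1 x R)) ` P)"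

definition diam_u :: "('a::metric_space \<Rightarrow> 'a \<Rightarrow> 'a) \<Rightarrow> real \<Rightarrow> 'a set set \<Rightarrow> real" where
  "diam_u br e1 P = Min ((\<lambda>R. INF x\<in>R. diameter (Xu_R br e1 x R)) ` P)"

definition Lip :: "('a::metric_space \<Rightarrow> 'b::metric_space) \<Rightarrow> real" where
  "Lip f = Inf {L. L-lipschitz_on UNIV f}"

end

theory Submission
  imports Defs
begin

text \<open>
  Let R = (INT i. phi^-i (R_i)), |i| < n, be a member of R_n, pick x in its interior and put
  y = phi^(1-n) x. Along the orbit y, phi y, ..., phi^(2n-2) y the Markov property maps the
  stable leaf of each point in its rectangle R_i into the stable leaf of the next one, so
  phi^(n-1) maps the whole stable leaf of y in R_(1-n) into R. Pulling back by phi^(1-n), which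
  is Lip(phi^-1)^(n-1)-Lipschitz, bounds the diameter of that leaf, and hence diam_s R_1, by
  Lip(phi^-1)^(n-1) diam R. The unstable bound is the same argument for phi^-1, whose refined
  partitions coincide with those of phi. R_n is finite, and nonempty because its candidates are
  finitely many closed sets covering X, one of which must have interior.
\<close>

lemma phi_pow_0 [simp]: "phi_pow f 0 = id"
  by (simp add: phi_pow_def fun_eq_iff)

lemma phi_pow_of_nat: "phi_pow f (int k) = f ^^ k"
  by (simp add: phi_pow_def)

lemma phi_pow_add_1:
  assumes "bij f"
  shows "phi_pow f (i + 1) x = f (phi_pow f i x)"
proof (cases "0 \<le> i")
  case True
  then have "nat (i + 1) = Suc (nat i)" by simp
  then show ?thesis using True by (simp add: phi_pow_def)
next
  case False
  then have "nat (- i) = Suc (nat (- (i + 1)))" by simp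
  then have "phi_pow f i x = inv f (phi_pow f (i + 1) x)"
    using False by (simp add: phi_pow_def)
  then show ?thesis using assms by (simp add: bij_is_surj surj_f_inv_f)
qed

lemma phi_pow_diff_1:
  assumes "bij f"
  shows "phi_pow f (i - 1) x = inv f (phi_pow f i x)"
  using phi_pow_add_1[OF assms, of "i - 1" x] assms by (simp add: bij_is_inj)

lemma phi_pow_add:
  assumes "bij f"
  shows "phi_pow f a (phi_pow f b x) = phi_pow f (a + b) x"
proof (induction a rule: int_induct[where k = 0])
  case base
  show ?case by simp
next
  case (step1 i)
  then show ?case using phi_pow_add_1[OF assms] by (metis add.commute add.left_commute)
next
  case (step2 i)
  then show ?case using phi_pow_diff_1[OF assms] by (metis add.commute add_diff_eq)
qed

lemma image_phi_pow_uminus: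
  assumes "bij f"
  shows "phi_pow f (- i) ` A = phi_pow f i -` A"
proof -
  have "phi_pow f i (phi_pow f (- i) x) = x" "phi_pow f (- i) (phi_pow f i x) = x" for x
    using phi_pow_add[OF assms] by simp_all
  then show ?thesis
    by (auto intro: rev_image_eqI)
qed

lemma phi_pow_inv:
  assumes "bij f"
  shows "phi_pow (inv f) i = phi_pow f (- i)"
  using assms by (simp add: phi_pow_def inv_inv_eq)

lemma continuous_on_funpow:
  fixes f :: "'a::topological_space \<Rightarrow> 'a"
  assumes "continuous_on UNIV f"
  shows "continuous_on UNIV (f ^^ k)"
proof (induction k)
  case 0
  show ?case by (simp add: funpow.simps(1) continuous_on_id)
next
  case (Suc k)
  then show ?case
    using continuous_on_compose[of UNIV "f ^^ k" f] assms continuous_on_subset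
    by (metis funpow.simps(2) subset_UNIV)
qed

lemma continuous_on_phi_pow:
  fixes f :: "'a::topological_space \<Rightarrow> 'a"
  assumes "continuous_on UNIV f" "continuous_on UNIV (inv f)"
  shows "continuous_on UNIV (phi_pow f i)"
  unfolding phi_pow_def using continuous_on_funpow assms by auto

lemma phi_pow_mem_interior:
  fixes f :: "'a::t2_space \<Rightarrow> 'a"
  assumes "bij f" "continuous_on UNIV f" "continuous_on UNIV (inv f)"
    and "x \<in> interior (phi_pow f (- i) ` A)"
  shows "phi_pow f i x \<in> interior A"
proof -
  have "phi_pow f i (phi_pow f (- i) y) = y" for y
    using phi_pow_add[OF assms(1)] by simp
  then have "inj (phi_pow f (- i))"
    by (metis injI)
  moreover have "continuous (at y) (phi_pow f (- i))" for y
    using continuous_on_phi_pow[OF assms(2,3)] by (simp add: continuous_on_eq_continuous_at)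
  ultimately have "x \<in> phi_pow f (- i) ` interior A"
    using interior_image_subset assms(4) by blast
  then show ?thesis
    unfolding image_phi_pow_uminus[OF assms(1)] by simp
qed

lemma lipschitz_on_funpow:
  fixes f :: "'a::metric_space \<Rightarrow> 'a"
  assumes "L-lipschitz_on UNIV f"
  shows "(L ^ k)-lipschitz_on UNIV (f ^^ k)"
proof (induction k)
  case 0
  show ?case by (simp add: lipschitz_on_def funpow.simps(1))
next
  case (Suc k)
  have "L-lipschitz_on ((f ^^ k) ` UNIV) f"
    using assms lipschitz_on_subset by blast
  then show ?case
    using lipschitz_on_compose[OF Suc] by (simp add: mult.commute)
qed

lemma diameter_lipschitz_image:
  assumes "L-lipschitz_on S f" "bounded S"
  shows "diameter (f ` S) \<le> L * diameter S"
proof (cases "S = {}")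
  case False
  have "dist (f a) (f b) \<le> L * diameter S" if "a \<in> S" "b \<in> S" for a b
    using lipschitz_onD[OF assms(1) that] diameter_bounded_bound[OF assms(2) that]
      mult_left_mono[OF _ lipschitz_on_nonneg[OF assms(1)]] order_trans by blast
  then show ?thesis
    using False unfolding diameter_def by (auto intro!: cSUP_least)
qed simp

lemma diameter_le_funpow_image:
  fixes g :: "'a::metric_space \<Rightarrow> 'a"
  assumes "bij g" "L-lipschitz_on UNIV (inv g)" "bounded (UNIV :: 'a set)"
  shows "diameter B \<le> L ^ k * diameter ((g ^^ k) ` B)"
proof -
  have "B = (inv g ^^ k) ` (g ^^ k) ` B"
    by (simp add: image_comp inv_fn_o_fn_is_id[OF assms(1)])
  also have "diameter \<dots> \<le> L ^ k * diameter ((g ^^ k) ` B)"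
    using diameter_lipschitz_image lipschitz_on_subset lipschitz_on_funpow[OF assms(2)]
      bounded_subset[OF assms(3)] by (metis subset_UNIV)
  finally show ?thesis .
qed

lemma lipschitz_on_Lip:
  assumes "\<exists>L. L-lipschitz_on UNIV f"
  shows "(Lip f)-lipschitz_on UNIV f"
proof (rule lipschitz_onI)
  let ?S = "{L. L-lipschitz_on UNIV f}"
  have ne: "?S \<noteq> {}" using assms by auto
  show "0 \<le> Lip f"
    unfolding Lip_def by (rule cInf_greatest[OF ne]) (simp add: lipschitz_on_def)
  fix x y
  show "dist (f x) (f y) \<le> Lip f * dist x y"
  proof (cases "x = y")
    case False
    then have "dist (f x) (f y) / dist x y \<le> Lip f"
      unfolding Lip_def
      by (intro cInf_greatest[OF ne]) (auto simp: lipschitz_on_def divide_le_eq)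
    then show ?thesis using False by (simp add: divide_le_eq)
  qed simp
qed

definition cylinder :: "('a \<Rightarrow> 'a) \<Rightarrow> nat \<Rightarrow> (int \<Rightarrow> 'a set) \<Rightarrow> 'a set" where
  "cylinder g n F = (\<Inter>i\<in>{1 - int n..int n - 1}. phi_pow g (- i) ` F i)"

lemma mem_cylinder:
  assumes "bij g"
  shows "x \<in> cylinder g n F \<longleftrightarrow> (\<forall>i\<in>{1 - int n..int n - 1}. phi_pow g i x \<in> F i)"
  by (simp add: cylinder_def image_phi_pow_uminus[OF assms])

lemma closed_cylinder:
  fixes g :: "'a::topological_space \<Rightarrow> 'a"
  assumes "bij g" "continuous_on UNIV g" "continuous_on UNIV (inv g)"
    and "\<forall>i\<in>{1 - int n..int n - 1}. closed (F i)"
  shows "closed (cylinder g n F)"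
  unfolding cylinder_def image_phi_pow_uminus[OF assms(1)] using assms(4)
  by (intro closed_INT ballI closed_vimage continuous_on_phi_pow assms(2,3)) auto

lemma refined_partition_eq_cylinders:
  "refined_partition g P n =
     {C \<in> cylinder g n ` ({1 - int n..int n - 1} \<rightarrow>\<^sub>E P). interior C \<noteq> {}}"
  (is "_ = {C \<in> cylinder g n ` (?I \<rightarrow>\<^sub>E P). _}")
proof (intro set_eqI iffI)
  fix R assume "R \<in> refined_partition g P n"
  then obtain f where f: "\<forall>i\<in>?I. f i \<in> P" "R = cylinder g n f" "interior R \<noteq> {}"
    unfolding refined_partition_def cylinder_def by blast
  have "R = cylinder g n (restrict f ?I)"
    using f(2) by (simp add: cylinder_def)
  then have "R \<in> cylinder g n ` (?I \<rightarrow>\<^sub>E P)"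
    by (rule image_eqI[where x = "restrict f ?I"]) (simp add: f(1))
  then show "R \<in> {C \<in> cylinder g n ` (?I \<rightarrow>\<^sub>E P). interior C \<noteq> {}}"
    using f(3) by blast
next
  fix R assume "R \<in> {C \<in> cylinder g n ` (?I \<rightarrow>\<^sub>E P). interior C \<noteq> {}}"
  then obtain F where "F \<in> ?I \<rightarrow>\<^sub>E P" "R = cylinder g n F" "interior R \<noteq> {}"
    by blast
  then show "R \<in> refined_partition g P n"
    unfolding refined_partition_def cylinder_def PiE_iff by blast
qed

lemma finite_refined_partition:
  assumes "finite P"
  shows "finite (refined_partition g P n)"
  unfolding refined_partition_eq_cylinders using assms by (simp add: finite_PiE)

lemma interior_Union_closed_eq_empty:
  assumes "finite \<F>" "\<forall>A\<in>\<F>. closed A \<and> interior A = {}"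
  shows "interior (\<Union>\<F>) = {}"
  using assms
proof (induction \<F> rule: finite_induct)
  case (insert A \<F>)
  then show ?case by (simp add: interior_closed_Un_empty_interior)
qed simp

lemma refined_partition_nonempty:
  fixes g :: "'a::topological_space \<Rightarrow> 'a"
  assumes "bij g" "continuous_on UNIV g" "continuous_on UNIV (inv g)"
    and "finite P" "\<Union>P = UNIV" "\<forall>R\<in>P. closed R"
  shows "refined_partition g P n \<noteq> {}"
proof -
  define I where "I = {1 - int n..int n - 1}"
  define \<C> where "\<C> = cylinder g n ` (I \<rightarrow>\<^sub>E P)"
  have "finite \<C>"
    unfolding \<C>_def I_def using assms(4) by (simp add: finite_PiE)
  moreover have closed: "\<forall>C\<in>\<C>. closed C"
    unfolding \<C>_def I_def using assms(6)
    by (auto intro!: closed_cylinder assms(1-3) simp: PiE_iff)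
  moreover have "\<Union>\<C> = UNIV"
  proof (intro set_eqI iffI UNIV_I)
    fix x :: 'a
    have "\<forall>i\<in>I. \<exists>R\<in>P. phi_pow g i x \<in> R"
      using assms(5) by blast
    then obtain F where F: "\<forall>i\<in>I. F i \<in> P \<and> phi_pow g i x \<in> F i"
      by metis
    then have "restrict F I \<in> I \<rightarrow>\<^sub>E P" "x \<in> cylinder g n (restrict F I)"
      unfolding mem_cylinder[OF assms(1)] I_def by auto
    then show "x \<in> \<Union>\<C>"
      unfolding \<C>_def by blast
  qed
  ultimately have "\<exists>C\<in>\<C>. interior C \<noteq> {}"
    using interior_Union_closed_eq_empty by fastforce
  then show ?thesis
    unfolding refined_partition_eq_cylinders \<C>_def I_def by blast
qed

lemma refined_partition_inv_subset:
  assumes "bij g"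
  shows "refined_partition (inv g) P n \<subseteq> refined_partition g P n"
proof
  let ?I = "{1 - int n..int n - 1}"
  fix R assume "R \<in> refined_partition (inv g) P n"
  then obtain f where f: "\<forall>i\<in>?I. f i \<in> P" "interior R \<noteq> {}"
    and R: "R = (\<Inter>i\<in>?I. phi_pow (inv g) (- i) ` f i)"
    unfolding refined_partition_def by blast
  have I: "uminus ` ?I = ?I"
    by simp
  define f' where "f' i = f (- i)" for i
  have "R = (\<Inter>i\<in>?I. phi_pow g i ` f i)"
    unfolding R phi_pow_inv[OF assms] by simp
  also have "\<dots> = (\<Inter>i\<in>uminus ` ?I. phi_pow g i ` f i)"
    unfolding I ..
  also have "\<dots> = (\<Inter>i\<in>?I. phi_pow g (- i) ` f (- i))"
    by (simp only: INF_image comp_def)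
  finally have "R = (\<Inter>i\<in>?I. phi_pow g (- i) ` f' i)"
    unfolding f'_def .
  moreover have "\<forall>i\<in>?I. f' i \<in> P"
    unfolding f'_def using f(1) I by force
  ultimately show "R \<in> refined_partition g P n"
    unfolding refined_partition_def using f(2) by blast
qed

lemma refined_partition_inv:
  assumes "bij g"
  shows "refined_partition (inv g) P n = refined_partition g P n"
proof (rule subset_antisym)
  show "refined_partition g P n \<subseteq> refined_partition (inv g) P n"
    using refined_partition_inv_subset[OF bij_imp_bij_inv[OF assms], of P n]
    unfolding inv_inv_eq[OF assms] .
qed (rule refined_partition_inv_subset[OF assms])

lemma funpow_image_leaf_subset:
  assumes markov: "\<And>Ri Rj x. \<lbrakk>Ri \<in> P; Rj \<in> P; x \<in> interior Ri; g x \<in> interior Rj\<rbrakk>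
      \<Longrightarrow> g ` S x Ri \<subseteq> S (g x) Rj"
    and orbit: "\<And>k. k \<le> m \<Longrightarrow> A k \<in> P \<and> (g ^^ k) y \<in> interior (A k)"
    and "k \<le> m"
  shows "(g ^^ k) ` S y (A 0) \<subseteq> S ((g ^^ k) y) (A k)"
  using \<open>k \<le> m\<close>
proof (induction k)
  case (Suc k)
  have "(g ^^ Suc k) ` S y (A 0) = g ` (g ^^ k) ` S y (A 0)"
    by (simp add: image_comp)
  also have "\<dots> \<subseteq> g ` S ((g ^^ k) y) (A k)"
    using Suc by (intro image_mono) simp
  also have "\<dots> \<subseteq> S ((g ^^ Suc k) y) (A (Suc k))"
    using markov orbit[of k] orbit[of "Suc k"] Suc.prems by simp
  finally show ?case .
qed simp

lemma refined_partition_interior_orbit: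
  fixes g :: "'a::t2_space \<Rightarrow> 'a"
  assumes g: "bij g" "continuous_on UNIV g" "continuous_on UNIV (inv g)"
    and R: "R \<in> refined_partition g P (Suc N)"
  obtains f x where "R = cylinder g (Suc N) f"
    and "\<And>i. i \<in> {- int N..int N} \<Longrightarrow> f i \<in> P \<and> phi_pow g i x \<in> interior (f i)"
proof -
  have I: "{1 - int (Suc N)..int (Suc N) - 1} = {- int N..int N}"
    by simp
  obtain f x where f: "\<forall>i\<in>{- int N..int N}. f i \<in> P" and R_eq: "R = cylinder g (Suc N) f"
    and x: "x \<in> interior R"
    using R unfolding refined_partition_eq_cylinders I by (auto simp: PiE_iff)
  have "phi_pow g i x \<in> interior (f i)" if "i \<in> {- int N..int N}" for i
  proof (rule phi_pow_mem_interior[OF g])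
    have "R \<subseteq> phi_pow g (- i) ` f i"
      unfolding R_eq cylinder_def I using that by blast
    then show "x \<in> interior (phi_pow g (- i) ` f i)"
      using x interior_mono by blast
  qed
  then show ?thesis
    using that R_eq f by blast
qed

lemma leaf_diameter_le_refined_partition:
  fixes g :: "'a::metric_space \<Rightarrow> 'a"
  assumes g: "bij g" "continuous_on UNIV g" "continuous_on UNIV (inv g)"
    and bounded: "bounded (UNIV :: 'a set)"
    and markov: "\<And>Ri Rj x. \<lbrakk>Ri \<in> P; Rj \<in> P; x \<in> interior Ri; g x \<in> interior Rj\<rbrakk>
      \<Longrightarrow> g ` S x Ri \<subseteq> S (g x) Rj"
    and leaf_subset: "\<And>x R. S x R \<subseteq> R"
    and lip: "L-lipschitz_on UNIV (inv g)"
    and R: "R \<in> refined_partition g P (Suc N)"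
  shows "\<exists>R0\<in>P. \<exists>y\<in>R0. diameter (S y R0) \<le> L ^ N * diameter R"
proof -
  obtain f x where R_eq: "R = cylinder g (Suc N) f"
    and x_orbit: "\<And>i. i \<in> {- int N..int N} \<Longrightarrow> f i \<in> P \<and> phi_pow g i x \<in> interior (f i)"
    using refined_partition_interior_orbit[OF g R] by blast
  define y where "y = phi_pow g (- int N) x"
  define A where "A k = f (int k - int N)" for k
  have funpow_y: "(g ^^ k) y = phi_pow g (int k - int N) x" for k
    unfolding y_def phi_pow_of_nat[symmetric] phi_pow_add[OF g(1)] by simp
  have orbit: "A k \<in> P \<and> (g ^^ k) y \<in> interior (A k)" if "k \<le> 2 * N" for k
    using that x_orbit unfolding A_def funpow_y by auto
  have "(g ^^ N) ` S y (A 0) \<subseteq> R"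
  proof
    fix w assume "w \<in> (g ^^ N) ` S y (A 0)"
    then obtain z where z: "z \<in> S y (A 0)" and w: "w = (g ^^ N) z"
      by blast
    have "phi_pow g i w \<in> f i" if i: "i \<in> {- int N..int N}" for i
    proof -
      define k where "k = nat (i + int N)"
      have "k \<le> 2 * N" "int k - int N = i"
        using i by (auto simp: k_def)
      have "phi_pow g i w = (g ^^ k) z"
        unfolding w phi_pow_of_nat[symmetric] phi_pow_add[OF g(1)] k_def using i by simp
      also have "\<dots> \<in> A k"
        using funpow_image_leaf_subset[where g = g and S = S and A = A,
            OF markov orbit \<open>k \<le> 2 * N\<close>] z leaf_subset
        by blast
      finally show ?thesis
        unfolding A_def \<open>int k - int N = i\<close> .
    qed
    then show "w \<in> R"
      unfolding R_eq mem_cylinder[OF g(1)] by simp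
  qed
  then have "diameter ((g ^^ N) ` S y (A 0)) \<le> diameter R"
    using bounded bounded_subset diameter_subset by blast
  then have "diameter (S y (A 0)) \<le> L ^ N * diameter R"
    using diameter_le_funpow_image[OF g(1) lip bounded, of "S y (A 0)" N]
      mult_left_mono[OF _ zero_le_power[OF lipschitz_on_nonneg[OF lip]]] order_trans by blast
  moreover have "A 0 \<in> P" "y \<in> A 0"
    using orbit[of 0] interior_subset by auto
  ultimately show ?thesis
    by blast
qed

lemma Min_INF_diameter_le:
  fixes S :: "'a \<Rightarrow> 'a set \<Rightarrow> 'a::metric_space set"
  assumes "finite P" "R \<in> P" "y \<in> R" "bounded (UNIV :: 'a set)"
  shows "Min ((\<lambda>R. INF x\<in>R. diameter (S x R)) ` P) \<le> diameter (S y R)"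
proof -
  have "Min ((\<lambda>R. INF x\<in>R. diameter (S x R)) ` P) \<le> (INF x\<in>R. diameter (S x R))"
    using assms(1,2) by (intro Min_le) auto
  also have "\<dots> \<le> diameter (S y R)"
    by (rule cINF_lower[OF _ assms(3)])
      (auto intro!: bdd_belowI[of _ 0] diameter_ge_0 bounded_subset[OF assms(4)])
  finally show ?thesis .
qed

lemma inverse_power_mult_le:
  fixes L a b :: real
  assumes "a \<le> L ^ N * b" "0 \<le> L" "0 \<le> b"
  shows "inverse L ^ N * a \<le> b"
proof (cases "L = 0")
  case True
  then show ?thesis using assms by (cases N) auto
next
  case False
  then have "inverse L ^ N * a \<le> inverse L ^ N * (L ^ N * b)"
    using assms by (intro mult_left_mono) auto
  also have "\<dots> = b"
    using False by (simp add: power_inverse field_simps)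
  finally show ?thesis .
qed

lemma Min_diameter_refined_partition_ge:
  fixes g :: "'a::metric_space \<Rightarrow> 'a"
  assumes g: "bij g" "continuous_on UNIV g" "continuous_on UNIV (inv g)"
    and bounded: "bounded (UNIV :: 'a set)"
    and P: "finite P" "\<Union>P = UNIV" "\<forall>R\<in>P. closed R"
    and markov: "\<And>Ri Rj x. \<lbrakk>Ri \<in> P; Rj \<in> P; x \<in> interior Ri; g x \<in> interior Rj\<rbrakk>
      \<Longrightarrow> g ` S x Ri \<subseteq> S (g x) Rj"
    and leaf_subset: "\<And>x R. S x R \<subseteq> R"
    and lip: "L-lipschitz_on UNIV (inv g)"
  shows "inverse L ^ N * Min ((\<lambda>R. INF x\<in>R. diameter (S x R)) ` P)
           \<le> Min (diameter ` refined_partition g P (Suc N))"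
proof -
  have "inverse L ^ N * Min ((\<lambda>R. INF x\<in>R. diameter (S x R)) ` P) \<le> diameter R"
    if R: "R \<in> refined_partition g P (Suc N)" for R
  proof (rule inverse_power_mult_le)
    obtain R0 y where "R0 \<in> P" "y \<in> R0" "diameter (S y R0) \<le> L ^ N * diameter R"
      using leaf_diameter_le_refined_partition[where S = S, OF g bounded markov leaf_subset lip R] by blast
    then show "Min ((\<lambda>R. INF x\<in>R. diameter (S x R)) ` P) \<le> L ^ N * diameter R"
      using Min_INF_diameter_le[OF P(1) _ _ bounded] order_trans by blast
    show "0 \<le> L" "0 \<le> diameter R"
      using lipschitz_on_nonneg[OF lip] diameter_ge_0 bounded_subset[OF bounded] by auto
  qed
  then show ?thesis
    using finite_refined_partition[OF P(1)] refined_partition_nonempty[OF g P]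
    by (simp add: Min_ge_iff)
qed

lemma smale_spaceD:
  fixes phi :: "'a::metric_space \<Rightarrow> 'a"
  assumes "smale_space phi eps lam br"
  shows "bij phi" "continuous_on UNIV phi" "continuous_on UNIV (inv phi)"
    and "bounded (UNIV :: 'a set)"
proof -
  have "compact (UNIV :: 'a set) \<and> bij phi \<and> continuous_on UNIV phi \<and> continuous_on UNIV (inv phi)"
    using assms unfolding smale_space_def by (simp only:)
  then show "bij phi" "continuous_on UNIV phi" "continuous_on UNIV (inv phi)"
    and "bounded (UNIV :: 'a set)"
    using compact_imp_bounded by auto
qed

lemma markov_partitionD:
  assumes "markov_partition phi br e1 P"
  shows "finite P" "\<Union>P = UNIV" "\<forall>R\<in>P. closed R"
    and "\<forall>Ri\<in>P. \<forall>Rj\<in>P. \<forall>x \<in> interior Ri \<inter> phi -` interior Rj.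
           Xu_R br e1 (phi x) Rj \<subseteq> phi ` Xu_R br e1 x Ri \<and>
           phi ` Xs_R br e1 x Ri \<subseteq> Xs_R br e1 (phi x) Rj"
proof -
  have "finite P \<and> \<Union>P = UNIV \<and> (\<forall>R\<in>P. proper_rectangle br e1 R)"
    using assms unfolding markov_partition_def by (elim conjE) blast
  then show "finite P" "\<Union>P = UNIV" "\<forall>R\<in>P. closed R"
    unfolding proper_rectangle_def by auto
  show "\<forall>Ri\<in>P. \<forall>Rj\<in>P. \<forall>x \<in> interior Ri \<inter> phi -` interior Rj.
           Xu_R br e1 (phi x) Rj \<subseteq> phi ` Xu_R br e1 x Ri \<and>
           phi ` Xs_R br e1 x Ri \<subseteq> Xs_R br e1 (phi x) Rj"
    using assms unfolding markov_partition_def by (elim conjE) assumption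
qed

lemma markov_partition_stable_leaves:
  assumes "markov_partition phi br e1 P" "Ri \<in> P" "Rj \<in> P"
    and "x \<in> interior Ri" "phi x \<in> interior Rj"
  shows "phi ` Xs_R br e1 x Ri \<subseteq> Xs_R br e1 (phi x) Rj"
  using markov_partitionD(4)[OF assms(1)] assms(2-5) by blast

lemma markov_partition_unstable_leaves_inv:
  assumes "bij phi" "markov_partition phi br e1 P" "Rj \<in> P" "Ri \<in> P"
    and "z \<in> interior Rj" "inv phi z \<in> interior Ri"
  shows "inv phi ` Xu_R br e1 z Rj \<subseteq> Xu_R br e1 (inv phi z) Ri"
proof -
  have z: "phi (inv phi z) = z"
    using assms(1) by (simp add: bij_is_surj surj_f_inv_f)
  then have "Xu_R br e1 z Rj \<subseteq> phi ` Xu_R br e1 (inv phi z) Ri"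
    using markov_partitionD(4)[OF assms(2)] assms(3-6) by (metis IntI vimageI)
  then have "inv phi ` Xu_R br e1 z Rj \<subseteq> inv phi ` phi ` Xu_R br e1 (inv phi z) Ri"
    by (rule image_mono)
  then show ?thesis
    using assms(1) by (simp add: image_comp bij_is_inj)
qed

lemma Min_diameter_refined_partition_ge_diam_s:
  fixes phi :: "'a::metric_space \<Rightarrow> 'a"
  assumes "smale_space phi eps lam br" "markov_partition phi br e1 P"
    and "\<exists>L. L-lipschitz_on UNIV (inv phi)"
  shows "inverse (Lip (inv phi)) ^ N * diam_s br e1 P
           \<le> Min (diameter ` refined_partition phi P (Suc N))"
  unfolding diam_s_def
proof (rule Min_diameter_refined_partition_ge[where S = "Xs_R br e1",
      OF smale_spaceD[OF assms(1)] markov_partitionD(1-3)[OF assms(2)]])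
  show "phi ` Xs_R br e1 x Ri \<subseteq> Xs_R br e1 (phi x) Rj"
    if "Ri \<in> P" "Rj \<in> P" "x \<in> interior Ri" "phi x \<in> interior Rj" for Ri Rj x
    using markov_partition_stable_leaves[OF assms(2) that] .
  show "Xs_R br e1 x R \<subseteq> R" for x R
    by (simp add: Xs_R_def)
qed (rule lipschitz_on_Lip[OF assms(3)])

lemma Min_diameter_refined_partition_ge_diam_u:
  fixes phi :: "'a::metric_space \<Rightarrow> 'a"
  assumes "smale_space phi eps lam br" "markov_partition phi br e1 P"
    and "\<exists>L. L-lipschitz_on UNIV phi"
  shows "inverse (Lip phi) ^ N * diam_u br e1 P
           \<le> Min (diameter ` refined_partition phi P (Suc N))"
proof -
  note phi = smale_spaceD[OF assms(1)]
  have inv_inv: "inv (inv phi) = phi"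
    using phi(1) by (rule inv_inv_eq)
  have "inverse (Lip phi) ^ N * diam_u br e1 P
          \<le> Min (diameter ` refined_partition (inv phi) P (Suc N))"
    unfolding diam_u_def
  proof (rule Min_diameter_refined_partition_ge[where S = "Xu_R br e1",
        OF bij_imp_bij_inv[OF phi(1)] phi(3) _ phi(4) markov_partitionD(1-3)[OF assms(2)]])
    show "continuous_on UNIV (inv (inv phi))" "(Lip phi)-lipschitz_on UNIV (inv (inv phi))"
      unfolding inv_inv by (fact phi(2), rule lipschitz_on_Lip[OF assms(3)])
    show "inv phi ` Xu_R br e1 z Rj \<subseteq> Xu_R br e1 (inv phi z) Ri"
      if "Rj \<in> P" "Ri \<in> P" "z \<in> interior Rj" "inv phi z \<in> interior Ri" for Ri Rj z
      using markov_partition_unstable_leaves_inv[OF phi(1) assms(2) that] .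
    show "Xu_R br e1 x R \<subseteq> R" for x R
      by (simp add: Xu_R_def)
  qed
  then show ?thesis
    unfolding refined_partition_inv[OF phi(1)] .
qed

theorem lemma6p15:
  fixes phi :: "'a::metric_space \<Rightarrow> 'a" and br :: "'a \<Rightarrow> 'a \<Rightarrow> 'a"
    and eps lam e1 e2 :: real and P :: "'a set set"
  assumes "smale_space phi eps lam br"
    and "irreducible_map phi"
    and "eps1_ok br eps e1"
    and "eps2_ok phi br e1 e2"
    and "markov_partition phi br e1 P"
    and "\<forall>R\<in>P. diameter R \<le> e2 / 2"
  shows "((\<exists>L. L-lipschitz_on UNIV (inv phi)) \<longrightarrow>
           (\<forall>n::nat. n \<ge> 1 \<longrightarrow>
              Min (diameter ` refined_partition phi P n)
                \<ge> inverse (Lip (inv phi)) ^ (n - 1) * diam_s br e1 P))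
       \<and> ((\<exists>L. L-lipschitz_on UNIV phi) \<longrightarrow>
           (\<forall>n::nat. n \<ge> 1 \<longrightarrow>
              Min (diameter ` refined_partition phi P n)
                \<ge> inverse (Lip phi) ^ (n - 1) * diam_u br e1 P))"
proof (intro conjI impI allI)
  fix n :: nat assume "n \<ge> 1"
  then obtain N where n: "n = Suc N"
    by (cases n) auto
  show "Min (diameter ` refined_partition phi P n)
          \<ge> inverse (Lip (inv phi)) ^ (n - 1) * diam_s br e1 P"
    if "\<exists>L. L-lipschitz_on UNIV (inv phi)"
    using Min_diameter_refined_partition_ge_diam_s[OF assms(1,5) that] n by simp
  show "Min (diameter ` refined_partition phi P n)
          \<ge> inverse (Lip phi) ^ (n - 1) * diam_u br e1 P"
    if "\<exists>L. L-lipschitz_on UNIV phi"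
    using Min_diameter_refined_partition_ge_diam_u[OF assms(1,5) that] n by simp
qed

end
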